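(* Let $n\ge 1$ and $k\ge 2$ be integers. Let $\overrightarrow{K_n}$ be the complete directed graph on $n$ vertices with a loop at each vertex and, for each pair of distinct vertices $i,j$, both directed edges $ij$ and $ji$. For any $1$-factorization of $\overrightarrow{K_n}$ there is a rainbow subgraph with maximum indegree and maximum outdegree at most one, having at least $n-6n^{\frac{k-1}{k}}$ edges, which contains no directed cycle $\overrightarrow{C_l}$ with $l\le k$.
   Context: A $1$-factorization of $\overrightarrow{K_n}$ is a coloring of its edges (loops included) such that each color class is a $1$-regular digraph, i.e. every vertex has exactly one outgoing and exactly one incoming edge of that color (a loop counts as one of each). A subgraph is rainbow if its edges have pairwise distinct colors. A directed cycle $\overrightarrow{C_l}$ of length $l$ is a sequence of $l$ distinct vertices $v_1,\dots,v_l$ with edges $v_1v_2,\dots,v_{l-1}v_l,v_lv_1$; a loop is a directed cycle of length $1$. *)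

theory Defs
  imports Complex_Main
begin

definition Kn_edges :: "nat \<Rightarrow> (nat \<times> nat) set" where
  "Kn_edges n = {0..<n} \<times> {0..<n}"

definition one_factorization :: "nat \<Rightarrow> (nat \<times> nat \<Rightarrow> 'c) \<Rightarrow> bool" where
  "one_factorization n col \<longleftrightarrow>
     (\<forall>x \<in> col ` Kn_edges n. \<forall>v<n.
        (\<exists>!u. u < n \<and> col (v, u) = x) \<and> (\<exists>!u. u < n \<and> col (u, v) = x))"

definition rainbow :: "(nat \<times> nat \<Rightarrow> 'c) \<Rightarrow> (nat \<times> nat) set \<Rightarrow> bool" where
  "rainbow col H \<longleftrightarrow> inj_on col H"

definition max_in_out_deg_le_one :: "(nat \<times> nat) set \<Rightarrow> bool" where
  "max_in_out_deg_le_one H \<longleftrightarrow>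
     (\<forall>v. card {u. (v, u) \<in> H} \<le> 1 \<and> card {u. (u, v) \<in> H} \<le> 1)"

text \<open>A directed cycle of length l in H: l distinct vertices v_0..v_{l-1} with the
edges v_i v_{i+1} (indices mod l) in H; l = 1 is a loop.\<close>

definition has_dicycle :: "(nat \<times> nat) set \<Rightarrow> nat \<Rightarrow> bool" where
  "has_dicycle H l \<longleftrightarrow>
     (\<exists>vs. length vs = l \<and> l \<ge> 1 \<and> distinct vs \<and>
        (\<forall>i<l. (vs ! i, vs ! ((i + 1) mod l)) \<in> H))"

end

theory Submission
  imports Defs
begin

text \<open>Take a largest rainbow subgraph H with in- and out-degrees at most one and no directed cycle
of length at most k, and let d = n - |H|: then d vertices have no in-edge and d colours are missing.
Starting from an uncovered vertex u, an edge (y, u) of a missing colour m cannot simply be added, so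
either y lies less than k steps ahead of u, or y already has an out-edge (y, z) in H, which
can be exchanged for (y, u) to leave z uncovered instead. Iterating such exchanges with a growing set
S of missing colours, the set of vertices that can be made uncovered grows by almost d with every new
colour, since a vertex u blocks at most k colours (one per vertex within distance k) and so some
colour is blocked by few vertices. After d/2 colours this set would exceed n unless d^2 \<le> 4kn,
and this gives d \<le> 6 n^((k-1)/k).\<close>

section \<open>Walks and short cycles\<close>

definition no_short_dicycle :: "nat \<Rightarrow> (nat \<times> nat) set \<Rightarrow> bool" where
  "no_short_dicycle k T \<longleftrightarrow> (\<forall>l. 1 \<le> l \<and> l \<le> k \<longrightarrow> \<not> has_dicycle T l)"

lemma single_valued_Image_singleton: "single_valued R \<Longrightarrow> \<exists>w. R `` {a} \<subseteq> {w}"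
  unfolding single_valued_def by blast

lemma card_le_one_if_subset_singleton: "A \<subseteq> {w} \<Longrightarrow> card A \<le> 1"
  using card_mono[of "{w}" A] by simp

lemma max_in_out_deg_le_one_if_single_valued:
  assumes "single_valued T" and "single_valued (T\<inverse>)"
  shows "max_in_out_deg_le_one T"
  unfolding max_in_out_deg_le_one_def
proof (intro allI conjI)
  fix v
  obtain w where "T `` {v} \<subseteq> {w}" using single_valued_Image_singleton[OF assms(1)] by blast
  then show "card {u. (v, u) \<in> T} \<le> 1" by (intro card_le_one_if_subset_singleton) auto
  obtain w' where "T\<inverse> `` {v} \<subseteq> {w'}" using single_valued_Image_singleton[OF assms(2)] by blast
  then show "card {u. (u, v) \<in> T} \<le> 1" by (intro card_le_one_if_subset_singleton) auto
qed

lemma single_valued_insert: "single_valued T \<Longrightarrow> y \<notin> Domain T \<Longrightarrow> single_valued (insert (y, u) T)"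
  unfolding single_valued_def by blast

lemma single_valued_converse_insert:
  "single_valued (T\<inverse>) \<Longrightarrow> u \<notin> Range T \<Longrightarrow> single_valued ((insert (y, u) T)\<inverse>)"
  unfolding single_valued_def by blast

lemma finite_card_reachable_within:
  fixes T :: "('a \<times> 'a) set"
  assumes "single_valued T"
  shows "finite {y. \<exists>j<k. (a, y) \<in> T ^^ j} \<and> card {y. \<exists>j<k. (a, y) \<in> T ^^ j} \<le> k"
proof -
  have eq: "{y. \<exists>j<k. (a, y) \<in> T ^^ j} = (\<Union>j<k. (T ^^ j) `` {a})" by blast
  have single: "\<exists>w. (T ^^ j) `` {a} \<subseteq> {w}" for j
    by (rule single_valued_Image_singleton[OF single_valued_relpow[OF assms]])
  then have "finite ((T ^^ j) `` {a})" for j by (meson finite.emptyI finite_insert finite_subset)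
  moreover have "card (\<Union>j<k. (T ^^ j) `` {a}) \<le> (\<Sum>j<k. card ((T ^^ j) `` {a}))"
    by (rule card_UN_le) simp
  moreover have "(\<Sum>j<k. card ((T ^^ j) `` {a})) \<le> (\<Sum>j<k. 1)"
    using single card_le_one_if_subset_singleton by (metis sum_mono)
  ultimately show ?thesis unfolding eq by auto
qed

lemma has_dicycle_mono: "has_dicycle G l \<Longrightarrow> G \<subseteq> G' \<Longrightarrow> has_dicycle G' l"
  unfolding has_dicycle_def by blast

lemma dicycle_through_new_edge:
  assumes cyc: "has_dicycle (insert (y, u) T) l" and no_cyc: "\<not> has_dicycle T l"
  shows "\<exists>j<l. (u, y) \<in> T ^^ j"
proof -
  obtain vs where len: "length vs = l" and l1: "1 \<le> l" and dist: "distinct vs"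
    and edges: "\<forall>i<l. (vs ! i, vs ! ((i + 1) mod l)) \<in> insert (y, u) T"
    using cyc unfolding has_dicycle_def by blast
  obtain i0 where i0: "i0 < l" "vs ! i0 = y" "vs ! ((i0 + 1) mod l) = u"
  proof -
    have "\<not> (\<forall>i<l. (vs ! i, vs ! ((i + 1) mod l)) \<in> T)"
      using no_cyc len l1 dist unfolding has_dicycle_def by blast
    then show thesis using edges that by blast
  qed
  have old_edge: "(vs ! i, vs ! ((i + 1) mod l)) \<in> T" if "i < l" "i \<noteq> i0" for i
  proof -
    have "vs ! i \<noteq> vs ! i0" using dist len that i0(1) nth_eq_iff_index_eq by metis
    then show ?thesis using edges that i0(2) by auto
  qed
  \<comment> \<open>walk around the cycle from u, never using the new edge before arriving at y\<close>
  have walk: "(u, vs ! ((i0 + 1 + j) mod l)) \<in> T ^^ j" if "j < l" for j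
    using that
  proof (induction j)
    case 0
    then show ?case using i0 by simp
  next
    case (Suc j)
    let ?i = "(i0 + 1 + j) mod l"
    have "?i \<noteq> i0"
    proof (cases "i0 + 1 + j < l")
      case False
      then have "?i = i0 + 1 + j - l" using Suc.prems i0(1) by (simp add: le_mod_geq)
      then show ?thesis using Suc.prems i0(1) False by simp
    qed simp
    then have "(vs ! ?i, vs ! ((?i + 1) mod l)) \<in> T" using old_edge l1 by simp
    moreover have "(?i + 1) mod l = (i0 + 1 + Suc j) mod l" by (simp add: mod_Suc_eq)
    ultimately show ?case using Suc by (auto intro: relpow_Suc_I)
  qed
  have "(i0 + 1 + (l - 1)) mod l = i0" using l1 i0(1) by simp
  then have "(u, y) \<in> T ^^ (l - 1)" using walk[of "l - 1"] l1 i0(2) by simp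
  then show ?thesis using l1 by (intro exI[of _ "l - 1"]) simp
qed

lemma short_path_if_new_short_dicycle:
  assumes "\<not> no_short_dicycle k G" and "G \<subseteq> insert (y, u) T" and "no_short_dicycle k T"
  shows "\<exists>j<k. (u, y) \<in> T ^^ j"
proof -
  obtain l where l: "1 \<le> l" "l \<le> k" "has_dicycle G l"
    using assms(1) unfolding no_short_dicycle_def by blast
  have "has_dicycle (insert (y, u) T) l" using has_dicycle_mono[OF l(3) assms(2)] .
  moreover have "\<not> has_dicycle T l" using assms(3) l(1,2) unfolding no_short_dicycle_def by blast
  ultimately obtain j where "j < l" "(u, y) \<in> T ^^ j" using dicycle_through_new_edge by blast
  then show ?thesis using l(2) by (intro exI[of _ j]) simp
qed

section \<open>Maximum admissible subgraphs\<close>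

definition admissible :: "nat \<Rightarrow> nat \<Rightarrow> (nat \<times> nat \<Rightarrow> 'c) \<Rightarrow> (nat \<times> nat) set \<Rightarrow> bool" where
  "admissible n k col T \<longleftrightarrow> T \<subseteq> Kn_edges n \<and> inj_on col T \<and>
     single_valued T \<and> single_valued (T\<inverse>) \<and> no_short_dicycle k T"

lemma finite_Kn_edges: "finite (Kn_edges n)"
  unfolding Kn_edges_def by simp

lemma admissible_finite: "admissible n k col T \<Longrightarrow> finite T"
  unfolding admissible_def using finite_Kn_edges finite_subset by blast

lemma admissible_empty: "admissible n k col {}"
  unfolding admissible_def no_short_dicycle_def has_dicycle_def by (fastforce simp: Suc_le_eq)

lemma admissible_card_le: "admissible n k col T \<Longrightarrow> card T \<le> n * n"
  unfolding admissible_def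
  using card_mono[OF finite_Kn_edges] by (fastforce simp: Kn_edges_def card_cartesian_product)

locale maximum_admissible =
  fixes n k :: nat and col :: "nat \<times> nat \<Rightarrow> 'c" and H :: "(nat \<times> nat) set"
  assumes factorization: "one_factorization n col" and n_pos: "1 \<le> n" and k_pos: "1 \<le> k"
    and admissible_H: "admissible n k col H"
    and maximum: "\<And>T. admissible n k col T \<Longrightarrow> card T \<le> card H"
begin

definition "colours = col ` Kn_edges n"
definition "missing = colours - col ` H"
definition "uncovered = {..<n} - Range H"
definition "deficit = n - card H"
definition "successor y = (THE z. (y, z) \<in> H)"

lemma H_subset: "H \<subseteq> Kn_edges n"
  using admissible_H unfolding admissible_def by blast

lemma finite_H: "finite H"
  using admissible_finite[OF admissible_H] .

lemma successor_eq: "(y, z) \<in> H \<Longrightarrow> successor y = z"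
  using admissible_H unfolding successor_def admissible_def single_valued_def by blast

lemma successor_in_H: "y \<in> Domain H \<Longrightarrow> (y, successor y) \<in> H"
  using successor_eq by blast

lemma in_edge_unique: "m \<in> colours \<Longrightarrow> v < n \<Longrightarrow> \<exists>!u. u < n \<and> col (u, v) = m"
  using factorization unfolding one_factorization_def colours_def by blast

lemma out_edge_unique: "m \<in> colours \<Longrightarrow> v < n \<Longrightarrow> \<exists>!u. u < n \<and> col (v, u) = m"
  using factorization unfolding one_factorization_def colours_def by blast

text \<open>switched S T u: T arises from H by a sequence of exchanges, each replacing an edge (y, z)
of H by (y, u), where u is the vertex currently without in-edge, col (y, u) is a fresh colour from S,
and z becomes the new vertex without in-edge; u is the final such vertex.\<close>

inductive switched :: "'c set \<Rightarrow> (nat \<times> nat) set \<Rightarrow> nat \<Rightarrow> bool" for S :: "'c set" where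
  start: "u \<in> uncovered \<Longrightarrow> switched S H u"
| switch: "switched S T u \<Longrightarrow> (y, z) \<in> T \<Longrightarrow> (y, z) \<in> H \<Longrightarrow> col (y, u) \<in> S \<Longrightarrow>
    col (y, u) \<notin> col ` T \<Longrightarrow> no_short_dicycle k (insert (y, u) (T - {(y, z)})) \<Longrightarrow>
    switched S (insert (y, u) (T - {(y, z)})) z"

definition "freeable S = {u. \<exists>T. switched S T u}"

lemma switched_mono: "switched S T u \<Longrightarrow> S \<subseteq> S' \<Longrightarrow> switched S' T u"
  by (induction rule: switched.induct) (auto intro: switched.intros)

lemma freeable_mono: "S \<subseteq> S' \<Longrightarrow> freeable S \<subseteq> freeable S'"
  unfolding freeable_def using switched_mono by blast

lemma uncovered_subset_freeable: "uncovered \<subseteq> freeable S"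
  unfolding freeable_def using switched.start by blast

lemma switched_admissible: "switched S T u \<Longrightarrow> admissible n k col T \<and> u < n \<and> u \<notin> Range T"
proof (induction rule: switched.induct)
  case (start u)
  then show ?case using admissible_H unfolding uncovered_def by auto
next
  case (switch T u y z)
  let ?T0 = "T - {(y, z)}"
  have T: "T \<subseteq> Kn_edges n" "inj_on col T" "single_valued T" "single_valued (T\<inverse>)"
    and "u < n" and u_free: "u \<notin> Range T"
    using switch.IH unfolding admissible_def by auto
  have "y < n" "z < n" using T(1) switch.hyps(2) unfolding Kn_edges_def by auto
  have y_free: "y \<notin> Domain ?T0" using T(3) switch.hyps(2) unfolding single_valued_def by blast
  have "inj_on col ?T0" "col (y, u) \<notin> col ` ?T0"
    using T(2) switch.hyps(5) by (auto intro: inj_on_subset)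
  then have "inj_on col (insert (y, u) ?T0)" by auto
  moreover have "single_valued (insert (y, u) ?T0)"
    using single_valued_insert[OF single_valued_subset[OF _ T(3)] y_free] by blast
  moreover have "single_valued ((insert (y, u) ?T0)\<inverse>)"
    using single_valued_converse_insert[OF single_valued_subset[OF _ T(4)]] u_free by blast
  moreover have "insert (y, u) ?T0 \<subseteq> Kn_edges n"
    using T(1) \<open>y < n\<close> \<open>u < n\<close> unfolding Kn_edges_def by auto
  moreover have "z \<notin> Range (insert (y, u) ?T0)"
    using T(4) switch.hyps(2) u_free unfolding single_valued_def by blast
  ultimately show ?case using switch.hyps(6) \<open>z < n\<close> unfolding admissible_def by blast
qed

lemma freeable_subset: "freeable S \<subseteq> {..<n}"
  unfolding freeable_def using switched_admissible by blast

lemma finite_freeable: "finite (freeable S)"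
  using finite_subset[OF freeable_subset] by blast

lemma switched_card: "switched S T u \<Longrightarrow> card T = card H"
proof (induction rule: switched.induct)
  case (switch T u y z)
  have "finite T" "u \<notin> Range T"
    using switched_admissible[OF switch.hyps(1)] admissible_finite by auto
  moreover have "0 < card T" using \<open>finite T\<close> switch.hyps(2) card_gt_0_iff by blast
  ultimately show ?case using switch.hyps(2) switch.IH by (simp add: Range_iff)
qed simp

lemma switched_Domain: "switched S T u \<Longrightarrow> Domain T = Domain H"
  by (induction rule: switched.induct) blast+

lemma switched_colours: "switched S T u \<Longrightarrow> col ` T \<subseteq> col ` H \<union> S"
  by (induction rule: switched.induct) auto

lemma successor_freeable_if_switched_edge:
  assumes "switched S T u" and "(y, w) \<in> T" and "(y, w) \<notin> H"
  shows "successor y \<in> freeable S"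
  using assms
proof (induction arbitrary: y w rule: switched.induct)
  case (switch T u y' z)
  show ?case
  proof (cases "(y, w) = (y', u)")
    case True
    then have "successor y = z" using successor_eq switch.hyps(3) by simp
    then show ?thesis using switched.switch[OF switch.hyps] unfolding freeable_def by blast
  qed (use switch in blast)
qed simp

lemma short_path_if_addable:
  assumes T: "admissible n k col T" "card T = card H"
    and "u < n" "y < n" "u \<notin> Range T" "y \<notin> Domain T" "col (y, u) \<notin> col ` T"
  shows "\<exists>j<k. (u, y) \<in> T ^^ j"
proof -
  let ?T' = "insert (y, u) T"
  have "(y, u) \<notin> T" using assms by blast
  then have "card ?T' = Suc (card H)" using T admissible_finite[OF T(1)] by simp
  then have "\<not> admissible n k col ?T'" using maximum by fastforce
  moreover have "?T' \<subseteq> Kn_edges n" "inj_on col ?T'" "single_valued ?T'" "single_valued (?T'\<inverse>)"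
    using assms single_valued_insert single_valued_converse_insert
    unfolding admissible_def Kn_edges_def by auto
  ultimately have "\<not> no_short_dicycle k ?T'" unfolding admissible_def by blast
  then show ?thesis
    using short_path_if_new_short_dicycle T(1) unfolding admissible_def by blast
qed

lemma short_path_or_successor_freeable:
  assumes sw: "switched S T u" and m: "m \<in> missing" "m \<notin> S"
    and "y < n" and col_yu: "col (y, u) = m"
  shows "(\<exists>j<k. (u, y) \<in> T ^^ j) \<or> (y \<in> Domain H \<and> successor y \<in> freeable (insert m S))"
proof -
  have T: "admissible n k col T" "u < n" "u \<notin> Range T"
    using switched_admissible[OF sw] by auto
  have "m \<notin> col ` T" using switched_colours[OF sw] m unfolding missing_def by blast
  show ?thesis
  proof (cases "y \<in> Domain H")
    case False
    then have "y \<notin> Domain T" using switched_Domain[OF sw] by blast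
    then show ?thesis using short_path_if_addable[OF T(1) switched_card[OF sw] T(2) \<open>y < n\<close> T(3)]
        \<open>m \<notin> col ` T\<close> col_yu by blast
  next
    case True
    then obtain w where yw: "(y, w) \<in> T" using switched_Domain[OF sw] by blast
    show ?thesis
    proof (cases "(y, w) \<in> H")
      case False
      then show ?thesis using successor_freeable_if_switched_edge[OF sw yw] freeable_mono True
        by blast
    next
      case True
      let ?T' = "insert (y, u) (T - {(y, w)})"
      show ?thesis
      proof (cases "no_short_dicycle k ?T'")
        case True
        have "switched (insert m S) ?T' w"
          using switched.switch[OF switched_mono[OF sw] yw \<open>(y, w) \<in> H\<close> _ _ True]
            \<open>m \<notin> col ` T\<close> col_yu by auto
        then show ?thesis using successor_eq[OF \<open>(y, w) \<in> H\<close>] \<open>(y, w) \<in> H\<close>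
          unfolding freeable_def by blast
      next
        case False
        then show ?thesis
          using short_path_if_new_short_dicycle[of k ?T' y u T] T(1) unfolding admissible_def
          by blast
      qed
    qed
  qed
qed

section \<open>Counting freeable vertices\<close>

definition "witness S u = (SOME T. switched S T u)"
definition "in_neighbour m u = (THE y. y < n \<and> col (y, u) = m)"
definition "blocked S m u \<longleftrightarrow> (\<exists>j<k. (u, in_neighbour m u) \<in> witness S u ^^ j)"

lemma switched_witness: "u \<in> freeable S \<Longrightarrow> switched S (witness S u) u"
  unfolding freeable_def witness_def by (auto intro: someI)

lemma in_neighbour: "m \<in> colours \<Longrightarrow> u < n \<Longrightarrow> in_neighbour m u < n \<and> col (in_neighbour m u, u) = m"
  unfolding in_neighbour_def using theI'[OF in_edge_unique] by blast

lemma missing_subset_colours: "missing \<subseteq> colours"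
  unfolding missing_def by blast

lemma finite_missing: "finite missing"
  using finite_Kn_edges unfolding missing_def colours_def by simp

lemma card_blocked_colours_le:
  assumes u: "u \<in> freeable S"
  shows "card {m \<in> missing - S. blocked S m u} \<le> k"
proof -
  let ?B = "{m \<in> missing - S. blocked S m u}"
  let ?R = "{y. \<exists>j<k. (u, y) \<in> witness S u ^^ j}"
  have "single_valued (witness S u)"
    using switched_admissible[OF switched_witness[OF u]] unfolding admissible_def by blast
  note R = finite_card_reachable_within[OF this, of k u]
  have "u < n" using u freeable_subset by blast
  have "inj_on (\<lambda>m. in_neighbour m u) ?B"
  proof (rule inj_onI)
    fix a b assume "a \<in> ?B" "b \<in> ?B" "in_neighbour a u = in_neighbour b u"
    then show "a = b"
      using in_neighbour[OF _ \<open>u < n\<close>] missing_subset_colours by (metis (no_types, lifting) DiffD1 mem_Collect_eq subsetD)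
  qed
  moreover have "(\<lambda>m. in_neighbour m u) ` ?B \<subseteq> ?R" unfolding blocked_def by blast
  ultimately have "card ?B \<le> card ?R" using R by (intro card_inj_on_le) auto
  then show ?thesis using R by linarith
qed

lemma sum_card_blocked_le:
  "(\<Sum>m\<in>missing - S. card {u \<in> freeable S. blocked S m u}) \<le> k * card (freeable S)"
proof -
  have "(\<Sum>m\<in>missing - S. card {u \<in> freeable S. blocked S m u})
      = (\<Sum>m\<in>missing - S. \<Sum>u\<in>freeable S. if blocked S m u then 1 else 0)"
    using finite_freeable by (simp add: sum.inter_filter[symmetric])
  also have "\<dots> = (\<Sum>u\<in>freeable S. \<Sum>m\<in>missing - S. if blocked S m u then 1 else 0)"
    by (rule sum.swap)
  also have "\<dots> = (\<Sum>u\<in>freeable S. card {m \<in> missing - S. blocked S m u})"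
    using finite_missing by (simp add: sum.inter_filter[symmetric])
  also have "\<dots> \<le> (\<Sum>u\<in>freeable S. k)" by (rule sum_mono) (rule card_blocked_colours_le)
  finally show ?thesis by (simp add: mult.commute)
qed

lemma rarely_blocked_colour:
  assumes "missing - S \<noteq> {}"
  shows "\<exists>m\<in>missing - S.
           card {u \<in> freeable S. blocked S m u} * card (missing - S) \<le> k * card (freeable S)"
proof (rule ccontr)
  assume "\<not> ?thesis"
  then have "(\<Sum>m\<in>missing - S. k * card (freeable S))
      < (\<Sum>m\<in>missing - S. card {u \<in> freeable S. blocked S m u} * card (missing - S))"
    using assms finite_missing by (intro sum_strict_mono) (auto simp: not_le)
  also have "\<dots> = (\<Sum>m\<in>missing - S. card {u \<in> freeable S. blocked S m u}) * card (missing - S)"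
    by (simp add: sum_distrib_right)
  also have "\<dots> \<le> k * card (freeable S) * card (missing - S)"
    using sum_card_blocked_le by (rule mult_right_mono) simp
  finally show False by simp
qed

text \<open>Every unblocked freeable vertex u frees the successor of the in-neighbour of u in colour m;
these successors are distinct and covered by H, so they are new beyond the uncovered vertices.\<close>

lemma card_freeable_insert_ge:
  assumes m: "m \<in> missing - S"
  shows "card uncovered + (card (freeable S) - card {u \<in> freeable S. blocked S m u})
           \<le> card (freeable (insert m S))"
proof -
  let ?G = "{u \<in> freeable S. \<not> blocked S m u}"
  let ?f = "\<lambda>u. successor (in_neighbour m u)"
  have "m \<in> colours" using m missing_subset_colours by blast
  have nb: "in_neighbour m u < n" "col (in_neighbour m u, u) = m" if "u \<in> ?G" for u
    using in_neighbour[OF \<open>m \<in> colours\<close>] that freeable_subset by blast+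
  have good: "(in_neighbour m u, ?f u) \<in> H \<and> ?f u \<in> freeable (insert m S)" if u: "u \<in> ?G" for u
    using short_path_or_successor_freeable[OF switched_witness _ _ nb[OF u]] u m successor_in_H
    unfolding blocked_def by blast
  have "inj_on ?f ?G"
  proof (rule inj_onI)
    fix a b assume a: "a \<in> ?G" and b: "b \<in> ?G" and "?f a = ?f b"
    then have "in_neighbour m a = in_neighbour m b"
      using good admissible_H unfolding admissible_def single_valued_def by (metis converseI)
    then have "col (in_neighbour m a, b) = m" using nb(2)[OF b] by simp
    moreover have "a < n" "b < n" using a b freeable_subset by auto
    ultimately show "a = b"
      using out_edge_unique[OF \<open>m \<in> colours\<close> nb(1)[OF a]] nb(2)[OF a] by auto
  qed
  moreover have "?G = freeable S - {u \<in> freeable S. blocked S m u}" by blast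
  ultimately have "card (?f ` ?G) = card (freeable S) - card {u \<in> freeable S. blocked S m u}"
    using finite_freeable by (simp add: card_image card_Diff_subset)
  moreover have "uncovered \<inter> ?f ` ?G = {}" using good unfolding uncovered_def by blast
  then have "card (uncovered \<union> ?f ` ?G) = card uncovered + card (?f ` ?G)"
    using finite_freeable unfolding uncovered_def by (intro card_Un_disjoint) auto
  moreover have "card (uncovered \<union> ?f ` ?G) \<le> card (freeable (insert m S))"
    using uncovered_subset_freeable good by (intro card_mono[OF finite_freeable]) blast
  ultimately show ?thesis by simp
qed

lemma card_colours: "card colours = n"
proof -
  have "0 < n" using n_pos by simp
  have "colours = (\<lambda>u. col (0, u)) ` {..<n}"
  proof
    show "colours \<subseteq> (\<lambda>u. col (0, u)) ` {..<n}"
      using out_edge_unique[OF _ \<open>0 < n\<close>] by blast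
  qed (use \<open>0 < n\<close> in \<open>auto simp: colours_def Kn_edges_def\<close>)
  moreover have "inj_on (\<lambda>u. col (0, u)) {..<n}"
  proof (rule inj_onI)
    fix a b assume "a \<in> {..<n}" "b \<in> {..<n}" "col (0, a) = col (0, b)"
    moreover have "col (0, a) \<in> colours"
      using \<open>a \<in> {..<n}\<close> \<open>0 < n\<close> unfolding colours_def Kn_edges_def by auto
    ultimately show "a = b" using out_edge_unique[OF _ \<open>0 < n\<close>] by auto
  qed
  ultimately show ?thesis by (simp add: card_image)
qed

lemma card_Range_H: "card (Range H) = card H"
proof -
  have "inj_on snd H"
    using admissible_H unfolding admissible_def single_valued_def by (intro inj_onI) auto
  then show ?thesis by (simp add: Range_snd card_image)
qed

lemma card_uncovered: "card uncovered = deficit"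
proof -
  have "Range H \<subseteq> {..<n}" using H_subset unfolding Kn_edges_def by auto
  then show ?thesis
    unfolding uncovered_def deficit_def by (simp add: card_Diff_subset finite_subset card_Range_H)
qed

lemma card_missing: "card missing = deficit"
proof -
  have "col ` H \<subseteq> colours" using H_subset unfolding colours_def by blast
  moreover have "card (col ` H) = card H"
    using admissible_H unfolding admissible_def by (simp add: card_image)
  ultimately show ?thesis
    unfolding missing_def deficit_def using finite_H finite_Kn_edges card_colours
    by (simp add: card_Diff_subset)
qed

lemma card_freeable_le: "card (freeable S) \<le> n"
  using card_mono[OF _ freeable_subset] by simp

lemma freeable_grows:
  assumes large: "4 * k * n < deficit * deficit"
    and S: "S \<subseteq> missing" and small: "2 * card S < deficit"
  shows "\<exists>m\<in>missing - S. 2 * card (freeable S) + deficit \<le> 2 * card (freeable (insert m S))"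
proof -
  define d where "d = deficit"
  define c where "c = card (freeable S)"
  define r where "r = card (missing - S)"
  have "finite S" using S finite_missing finite_subset by blast
  then have "r = d - card S" unfolding r_def d_def using card_Diff_subset[OF _ S] card_missing by simp
  then have r: "d + 1 \<le> 2 * r" using small unfolding d_def by linarith
  then have "missing - S \<noteq> {}" unfolding r_def by (intro notI) simp
  then obtain m where m: "m \<in> missing - S" and "card {u \<in> freeable S. blocked S m u} * r \<le> k * c"
    using rarely_blocked_colour unfolding r_def c_def by blast
  moreover define b where "b = card {u \<in> freeable S. blocked S m u}"
  ultimately have br: "b * r \<le> k * c" by simp
  have "4 * k * c < d * d"
    using large mult_le_mono2[OF card_freeable_le, of "4 * k" S] unfolding c_def d_def by linarith
  moreover have "2 * (b * (d + 1)) \<le> 4 * (b * r)"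
    using mult_le_mono2[OF r, of b] by simp
  ultimately have "2 * b * (d + 1) < d * d" using br by linarith
  then have "2 * b < d"
  proof (rule contrapos_pp)
    assume "\<not> 2 * b < d"
    then have "d * (d + 1) \<le> 2 * b * (d + 1)" by (intro mult_le_mono1) simp
    then show "\<not> 2 * b * (d + 1) < d * d" by simp
  qed
  moreover have "b \<le> c" unfolding b_def c_def by (rule card_mono[OF finite_freeable]) blast
  moreover have "d + (c - b) \<le> card (freeable (insert m S))"
    using card_freeable_insert_ge[OF m] card_uncovered unfolding b_def c_def d_def by simp
  ultimately show ?thesis using m unfolding c_def d_def by (intro bexI[of _ m]) linarith+
qed

lemma freeable_large:
  assumes large: "4 * k * n < deficit * deficit" and "2 * j \<le> deficit"
  shows "\<exists>S\<subseteq>missing. card S = j \<and> (j + 1) * deficit \<le> 2 * card (freeable S)"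
  using assms(2)
proof (induction j)
  case 0
  have "card uncovered \<le> card (freeable {})"
    using card_mono[OF finite_freeable uncovered_subset_freeable] .
  then show ?case using card_uncovered by (intro exI[of _ "{}"]) simp
next
  case (Suc j)
  then obtain S where S: "S \<subseteq> missing" "card S = j" "(j + 1) * deficit \<le> 2 * card (freeable S)"
    by auto
  then obtain m where m: "m \<in> missing - S"
    and grow: "2 * card (freeable S) + deficit \<le> 2 * card (freeable (insert m S))"
    using freeable_grows[OF large S(1)] Suc.prems by auto
  have "finite S" using S(1) finite_missing finite_subset by blast
  then have "card (insert m S) = Suc j" using m S(2) by simp
  moreover have "(Suc j + 1) * deficit \<le> 2 * card (freeable (insert m S))"
    using S(3) grow by simp
  ultimately show ?case using S(1) m by (intro exI[of _ "insert m S"]) auto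
qed

lemma deficit_squared_le: "deficit * deficit \<le> 4 * k * n"
proof (rule ccontr)
  assume large: "\<not> ?thesis"
  then obtain S where "(deficit div 2 + 1) * deficit \<le> 2 * card (freeable S)"
    using freeable_large[of "deficit div 2"] by auto
  then have "(deficit div 2 + 1) * deficit \<le> 2 * n" using card_freeable_le[of S] by linarith
  moreover have "deficit * deficit \<le> 2 * (deficit div 2 + 1) * deficit"
    by (intro mult_le_mono1) simp
  ultimately have "deficit * deficit \<le> 4 * n" by linarith
  also have "\<dots> \<le> 4 * k * n" using k_pos by simp
  finally show False using large by simp
qed

end

lemma le_six_powr_if_square_le:
  fixes n k d :: nat
  assumes "1 \<le> n" and "2 \<le> k" and "d \<le> n" and "d * d \<le> 4 * k * n"
  shows "real d \<le> 6 * real n powr ((real k - 1) / real k)"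
proof -
  define x where "x = real n powr (1 / real k)"
  have "0 < x" unfolding x_def using assms(1) by simp
  have x_pow: "x ^ j = real n powr (real j / real k)" for j
    unfolding x_def using assms(1) by (simp add: powr_powr powr_realpow[symmetric])
  have "real n = x ^ k" using x_pow[of k] assms(1,2) by simp
  moreover have "k = Suc (k - 1)" using assms(2) by simp
  ultimately have n_eq: "real n = x * x ^ (k - 1)" by (metis power_Suc)
  have rhs_eq: "real n powr ((real k - 1) / real k) = x ^ (k - 1)"
    using x_pow[of "k - 1"] assms(2) by simp
  show ?thesis
  proof (cases "x \<le> 6")
    case True
    then have "real n \<le> 6 * x ^ (k - 1)" using n_eq \<open>0 < x\<close> by (simp add: mult_right_mono)
    then show ?thesis using assms(3) rhs_eq by simp
  next
    case False
    have "j + 2 \<le> 9 * 6 ^ j" for j :: nat by (induction j) simp_all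
    from this[of "k - 2"] have "k \<le> 9 * 6 ^ (k - 2)" using assms(2) by simp
    then have "real k \<le> 9 * 6 ^ (k - 2)"
      by (metis of_nat_le_iff of_nat_mult of_nat_numeral of_nat_power)
    also have "\<dots> \<le> 9 * x ^ (k - 2)" using False by (simp add: power_mono)
    finally have k_le: "real k \<le> 9 * x ^ (k - 2)" .
    have "(k - 2) + Suc (k - 1) = (k - 1) + (k - 1)" using assms(2) by simp
    then have pow_eq: "x ^ (k - 2) * (x * x ^ (k - 1)) = x ^ (k - 1) * x ^ (k - 1)"
      by (metis power_add power_Suc)
    have "real d * real d \<le> 4 * real k * real n"
      using assms(4) of_nat_le_iff[of "d * d" "4 * k * n", where 'a = real] by simp
    also have "\<dots> \<le> 4 * (9 * x ^ (k - 2)) * real n"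
      using k_le by (simp add: mult_right_mono)
    also have "\<dots> = 36 * (x ^ (k - 2) * (x * x ^ (k - 1)))" using n_eq by simp
    also have "\<dots> = (6 * x ^ (k - 1)) * (6 * x ^ (k - 1))" using pow_eq by simp
    finally have "real d * real d \<le> (6 * x ^ (k - 1)) * (6 * x ^ (k - 1))" .
    then have "real d \<le> 6 * x ^ (k - 1)"
      using power2_le_imp_le[of "real d" "6 * x ^ (k - 1)"] \<open>0 < x\<close> by (simp add: power2_eq_square)
    then show ?thesis using rhs_eq by simp
  qed
qed

theorem mainTheorem4:
  fixes n k :: nat and col :: "nat \<times> nat \<Rightarrow> 'c"
  assumes "n \<ge> 1" and "k \<ge> 2"
    and "one_factorization n col"
  shows "\<exists>H. H \<subseteq> Kn_edges n \<and> rainbow col H \<and> max_in_out_deg_le_one H \<and>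
             real (card H) \<ge> real n - 6 * real n powr ((real k - 1) / real k) \<and>
             (\<forall>l. 1 \<le> l \<and> l \<le> k \<longrightarrow> \<not> has_dicycle H l)"
proof -
  have "\<forall>T. admissible n k col T \<longrightarrow> card T < n * n + 1"
    by (simp add: less_Suc_eq_le admissible_card_le)
  then obtain H where H: "admissible n k col H"
    and max: "\<forall>T. admissible n k col T \<longrightarrow> card T \<le> card H"
    using Lattices_Big.ex_has_greatest_nat[of "admissible n k col" "{}"] admissible_empty by blast
  interpret maximum_admissible n k col H
    using assms H max by unfold_locales auto
  have "real deficit \<le> 6 * real n powr ((real k - 1) / real k)"
    using le_six_powr_if_square_le[OF assms(1,2) _ deficit_squared_le] unfolding deficit_def
    by simp
  moreover have "card H \<le> n"
    using card_Range_H card_mono[of "{..<n}" "Range H"] H_subset unfolding Kn_edges_def by fastforce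
  ultimately have "real (card H) \<ge> real n - 6 * real n powr ((real k - 1) / real k)"
    unfolding deficit_def by simp
  moreover have "H \<subseteq> Kn_edges n" "rainbow col H" "max_in_out_deg_le_one H" "no_short_dicycle k H"
    using H max_in_out_deg_le_one_if_single_valued unfolding admissible_def rainbow_def by auto
  ultimately show ?thesis by (intro exI[of _ H]) (simp add: no_short_dicycle_def)
qed

end
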